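(* Let $\mathcal K$ denote one of the categories $\mathcal I$ or $\mathcal J$, with degree functor $\lambda(\mathbf k)=|\mathbf k|$ on $\mathcal I$ and $\lambda(\mathbf k_1,\mathbf k_2)=|\mathbf k_1|$ on $\mathcal J$. Suppose that $\mathcal A$ is a normal and multiplicative subcategory of automorphisms in $\mathcal K$ such that the inclusion $\mathcal K_{\mathcal A}\to\mathcal K$ is homotopy cofinal. Then $(\mathcal K,\mathcal A)$ is a well-structured relative index category, and if all objects of $\mathcal A$ have positive degree, then $(\mathcal K,\mathcal A)$ is very well-structured.
   Context: $\mathcal I$: objects $\mathbf n=\{1,\dots,n\}$, morphisms injections, symmetric monoidal under concatenation $\sqcup$ with unit $\mathbf 0$. $\mathcal J$: objects pairs $(\mathbf n_1,\mathbf n_2)$, morphisms $(\beta_1,\beta_2,\sigma)$ with $\beta_i$ injections and $\sigma$ a bijection between the complements of their images, composed by $(\beta_1\alpha_1,\beta_2\alpha_2,\tau)$ with $\tau=\sigma$ on $\mathbf n_1\setminus\beta_1$ and $\tau\beta_1=\beta_2\rho$ on $\mathbf m_1\setminus\alpha_1$; symmetric monoidal under componentwise concatenation with symmetry $(\chi,\chi,\mathrm{id})$. $\mathbb N_0$ is the poset $0\to1\to2\to\cdots$, symmetric monoidal under addition. A subcategory of automorphisms $\mathcal A$ of a small symmetric monoidal category $(\mathcal K,\sqcup,\mathbf 0)$ is a subcategory all of whose morphisms are automorphisms; $\mathcal A(\mathbf k)$ denotes its automorphism group at $\mathbf k$. It is normal if for each isomorphism $\alpha\colon\mathbf k\to\mathbf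 l$ of $\mathcal K$, $\mathbf k\in\mathcal A$ iff $\mathbf l\in\mathcal A$, and then $\gamma\mapsto\alpha\gamma\alpha^{-1}$ is an isomorphism $\mathcal A(\mathbf k)\to\mathcal A(\mathbf l)$; multiplicative if $\sqcup$ restricts to $\mathcal A\times\mathcal A\to\mathcal A$. $\mathcal K_{\mathcal A}$ is the full subcategory of $\mathcal K$ on the objects of $\mathcal A$. A subcategory $\mathcal B\subseteq\mathcal C$ is homotopy cofinal if each comma category $(c\downarrow\mathcal B)$ has contractible classifying space. A well-structured relative index category is $(\mathcal K,\lambda,\mathcal A)$ with $\lambda\colon\mathcal K\to\mathbb N_0$ strong symmetric monoidal and $\mathcal A$ normal multiplicative, such that: (i) a morphism $\mathbf k\to\mathbf l$ is an isomorphism iff $\lambda(\mathbf k)=\lambda(\mathbf l)$; (ii) for $\mathbf k\in\mathcal A$ and any $\mathbf l$, each connected component of the comma category $(\mathbf k\sqcup-\downarrow\mathbf l)$ (objects $(\mathbf n,\alpha\colon\mathbf k\sqcup\mathbf n\to\mathbf l)$) has a terminal object; (iii) for $\mathbf k\in\mathcal A$, the right action of $\mathcal A(\mathbf k)$ on $(\mathbf k\sqcup-\downarrow\mathbf l)$ induces a free action on its set of components; (iv) $\mathcal K_{\mathcal A}\to\mathcal K$ is homotopy cofinal. It is very well-structured if moreover for all $\mathbf k\in\mathcal A$, all $\mathbf l$ and $n\ge1$, the right action of $\Sigma_n\ltimes\mathcal A(\mathbf k)^{\times n}$ on $(\mathbf k^{\sqcup n}\sqcup-\downarrow\mathbf l)$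 (via $(\sigma;f_1,\dots,f_n)\mapsto\sigma_*\circ(f_1\sqcup\cdots\sqcup f_n)$, $\sigma_*$ the symmetry-induced permutation of $\mathbf k^{\sqcup n}$) is free on the set of connected components. *)

theory Defs
  imports "HOL-Analysis.Analysis"
begin

section \<open>Small categories, nerves and classifying spaces\<close>

record ('x,'y) cat =
  cObj :: "'x set"
  cHom :: "'x \<Rightarrow> 'x \<Rightarrow> 'y set"
  cComp :: "'y \<Rightarrow> 'y \<Rightarrow> 'y"   (* cComp g f = g o f *)
  cId :: "'x \<Rightarrow> 'y"

definition nerve :: "('x,'y) cat \<Rightarrow> nat \<Rightarrow> ('x list \<times> 'y list) set" where
  "nerve C n = {(xs, fs). length xs = Suc n \<and> length fs = n \<and> set xs \<subseteq> cObj C \<and>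
      (\<forall>i<n. fs ! i \<in> cHom C (xs ! i) (xs ! Suc i))}"

fun chain_comp :: "('x,'y) cat \<Rightarrow> 'x list \<Rightarrow> 'y list \<Rightarrow> nat \<Rightarrow> nat \<Rightarrow> 'y" where
  "chain_comp C xs fs a 0 = cId C (xs ! a)"
| "chain_comp C xs fs a (Suc d) = cComp C (fs ! (a + d)) (chain_comp C xs fs a d)"

text \<open>Simplicial operator induced by a monotone map theta : [m] -> [n].\<close>
definition nerve_op :: "('x,'y) cat \<Rightarrow> nat \<Rightarrow> (nat \<Rightarrow> nat) \<Rightarrow> ('x list \<times> 'y list) \<Rightarrow> ('x list \<times> 'y list)" where
  "nerve_op C m \<theta> \<sigma> = (case \<sigma> of (xs, fs) \<Rightarrow>
     (map (\<lambda>j. xs ! \<theta> j) [0..<Suc m],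
      map (\<lambda>j. chain_comp C xs fs (\<theta> j) (\<theta> (Suc j) - \<theta> j)) [0..<m]))"

definition std_simplex :: "nat \<Rightarrow> (nat \<Rightarrow> real) set" where
  "std_simplex n = {t. (\<forall>i. 0 \<le> t i) \<and> (\<forall>i>n. t i = 0) \<and> (\<Sum>i\<le>n. t i) = 1}"

definition simplex_push :: "nat \<Rightarrow> (nat \<Rightarrow> nat) \<Rightarrow> (nat \<Rightarrow> real) \<Rightarrow> (nat \<Rightarrow> real)" where
  "simplex_push m \<theta> t = (\<lambda>i. \<Sum>j\<in>{j. j \<le> m \<and> \<theta> j = i}. t j)"

definition monotone_map :: "nat \<Rightarrow> nat \<Rightarrow> (nat \<Rightarrow> nat) \<Rightarrow> bool" where
  "monotone_map m n \<theta> \<longleftrightarrow> (\<forall>j\<le>m. \<theta> j \<le> n) \<and> (\<forall>i j. i \<le> j \<and> j \<le> m \<longrightarrow> \<theta> i \<le> \<theta> j)"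

definition real_points :: "('x,'y) cat \<Rightarrow> (('x list \<times> 'y list) \<times> (nat \<Rightarrow> real)) set" where
  "real_points C = {(\<sigma>, t). \<exists>n. \<sigma> \<in> nerve C n \<and> t \<in> std_simplex n}"

definition real_rel :: "('x,'y) cat \<Rightarrow> (('x list \<times> 'y list) \<times> (nat \<Rightarrow> real)) \<Rightarrow> (('x list \<times> 'y list) \<times> (nat \<Rightarrow> real)) \<Rightarrow> bool" where
  "real_rel C p q \<longleftrightarrow> (\<exists>m n \<theta> \<sigma> t. \<sigma> \<in> nerve C n \<and> monotone_map m n \<theta> \<and> t \<in> std_simplex m \<and>
       p = (nerve_op C m \<theta> \<sigma>, t) \<and> q = (\<sigma>, simplex_push m \<theta> t))"

definition real_class :: "('x,'y) cat \<Rightarrow> (('x list \<times> 'y list) \<times> (nat \<Rightarrow> real)) \<Rightarrow> (('x list \<times> 'y list) \<times> (nat \<Rightarrow> real)) set" where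
  "real_class C p = {q. equivclp (real_rel C) p q}"

text \<open>Classifying space |N C|: quotient of the disjoint union of simplices, with the weak topology.\<close>
definition classifying_space :: "('x,'y) cat \<Rightarrow> (('x list \<times> 'y list) \<times> (nat \<Rightarrow> real)) set topology" where
  "classifying_space C = topology (\<lambda>V. V \<subseteq> real_class C ` real_points C \<and>
     (\<forall>n. \<forall>\<sigma>\<in>nerve C n. openin (top_of_set (std_simplex n)) {t \<in> std_simplex n. real_class C (\<sigma>, t) \<in> V}))"

definition contractible_cat :: "('x,'y) cat \<Rightarrow> bool" where
  "contractible_cat C \<longleftrightarrow> topspace (classifying_space C) \<noteq> {} \<and> contractible_space (classifying_space C)"

section \<open>Small symmetric monoidal categories with degree functor\<close>

record ('o,'m) smcat =
  Obj :: "'o set"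
  Hom :: "'o \<Rightarrow> 'o \<Rightarrow> 'm set"
  Comp :: "'m \<Rightarrow> 'm \<Rightarrow> 'm"
  Id :: "'o \<Rightarrow> 'm"
  Tens :: "'o \<Rightarrow> 'o \<Rightarrow> 'o"
  TensM :: "'m \<Rightarrow> 'm \<Rightarrow> 'm"
  Unit :: 'o
  Deg :: "'o \<Rightarrow> nat"
  BlockPerm :: "'o \<Rightarrow> nat \<Rightarrow> (nat \<Rightarrow> nat) \<Rightarrow> 'm"
    (* symmetry-induced permutation sigma_* of k^{\<sqcup>n} *)

definition is_iso :: "('o,'m) smcat \<Rightarrow> 'o \<Rightarrow> 'o \<Rightarrow> 'm \<Rightarrow> bool" where
  "is_iso K k l f \<longleftrightarrow> f \<in> Hom K k l \<and> (\<exists>g\<in>Hom K l k. Comp K g f = Id K k \<and> Comp K f g = Id K l)"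

definition iso_inv :: "('o,'m) smcat \<Rightarrow> 'o \<Rightarrow> 'o \<Rightarrow> 'm \<Rightarrow> 'm" where
  "iso_inv K k l f = (THE g. g \<in> Hom K l k \<and> Comp K g f = Id K k \<and> Comp K f g = Id K l)"

fun tpow :: "('o,'m) smcat \<Rightarrow> 'o \<Rightarrow> nat \<Rightarrow> 'o" where
  "tpow K k 0 = Unit K"
| "tpow K k (Suc n) = Tens K (tpow K k n) k"

fun tpowM :: "('o,'m) smcat \<Rightarrow> (nat \<Rightarrow> 'm) \<Rightarrow> nat \<Rightarrow> 'm" where
  "tpowM K fs 0 = Id K (Unit K)"
| "tpowM K fs (Suc n) = TensM K (tpowM K fs n) (fs n)"

section \<open>The categories I and J\<close>

definition inj_maps :: "nat \<Rightarrow> nat \<Rightarrow> (nat \<Rightarrow> nat) set" where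
  "inj_maps m n = {f. inj_on f {..<m} \<and> f ` {..<m} \<subseteq> {..<n} \<and> (\<forall>i\<ge>m. f i = 0)}"

definition inj_comp :: "nat \<Rightarrow> (nat \<Rightarrow> nat) \<Rightarrow> (nat \<Rightarrow> nat) \<Rightarrow> (nat \<Rightarrow> nat)" where
  "inj_comp l g f = (\<lambda>i. if i < l then g (f i) else 0)"

definition inj_id :: "nat \<Rightarrow> (nat \<Rightarrow> nat)" where
  "inj_id n = (\<lambda>i. if i < n then i else 0)"

definition inj_tens :: "nat \<Rightarrow> nat \<Rightarrow> nat \<Rightarrow> (nat \<Rightarrow> nat) \<Rightarrow> (nat \<Rightarrow> nat) \<Rightarrow> (nat \<Rightarrow> nat)" where
  "inj_tens m m' n f g = (\<lambda>i. if i < m then f i else if i < m + m' then n + g (i - m) else 0)"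

definition block_perm :: "nat \<Rightarrow> nat \<Rightarrow> (nat \<Rightarrow> nat) \<Rightarrow> (nat \<Rightarrow> nat)" where
  "block_perm k n \<sigma> = (\<lambda>i. if i < n * k then \<sigma> (i div k) * k + i mod k else 0)"

type_synonym Imor = "nat \<times> nat \<times> (nat \<Rightarrow> nat)"

definition Icat :: "(nat, Imor) smcat" where
  "Icat = \<lparr> Obj = UNIV,
     Hom = (\<lambda>m n. {(m, n, f) | f. f \<in> inj_maps m n}),
     Comp = (\<lambda>(b, c, g) (a, b', f). (a, c, inj_comp a g f)),
     Id = (\<lambda>n. (n, n, inj_id n)),
     Tens = (+),
     TensM = (\<lambda>(a, b, f) (c, d, g). (a + c, b + d, inj_tens a c b f g)),
     Unit = 0,
     Deg = (\<lambda>n. n),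
     BlockPerm = (\<lambda>k n \<sigma>. (n * k, n * k, block_perm k n \<sigma>)) \<rparr>"

type_synonym Jobj = "nat \<times> nat"
type_synonym Jmor = "Jobj \<times> Jobj \<times> (nat \<Rightarrow> nat) \<times> (nat \<Rightarrow> nat) \<times> (nat \<Rightarrow> nat)"

definition compl :: "nat \<Rightarrow> nat \<Rightarrow> (nat \<Rightarrow> nat) \<Rightarrow> nat set" where
  "compl m n f = {..<n} - f ` {..<m}"

definition Jhom :: "Jobj \<Rightarrow> Jobj \<Rightarrow> Jmor set" where
  "Jhom = (\<lambda>(m1, m2) (n1, n2). {((m1, m2), (n1, n2), b1, b2, s) | b1 b2 s.
      b1 \<in> inj_maps m1 n1 \<and> b2 \<in> inj_maps m2 n2 \<and>
      bij_betw s (compl m1 n1 b1) (compl m2 n2 b2) \<and> (\<forall>i. i \<notin> compl m1 n1 b1 \<longrightarrow> s i = 0)})"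

definition Jcomp :: "Jmor \<Rightarrow> Jmor \<Rightarrow> Jmor" where
  "Jcomp = (\<lambda>((m1, m2), (n1, n2), b1, b2, s) ((l1, l2), _, a1, a2, r).
     ((l1, l2), (n1, n2), inj_comp l1 b1 a1, inj_comp l2 b2 a2,
      (\<lambda>i. if i \<in> compl m1 n1 b1 then s i
           else if (\<exists>x. x \<in> compl l1 m1 a1 \<and> b1 x = i)
             then b2 (r (THE x. x < m1 \<and> b1 x = i)) else 0)))"

definition Jtensm :: "Jmor \<Rightarrow> Jmor \<Rightarrow> Jmor" where
  "Jtensm = (\<lambda>((m1, m2), (n1, n2), b1, b2, s) ((m1', m2'), (n1', n2'), b1', b2', s').
     ((m1 + m1', m2 + m2'), (n1 + n1', n2 + n2'),
      inj_tens m1 m1' n1 b1 b1', inj_tens m2 m2' n2 b2 b2',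
      (\<lambda>i. if i < n1 then s i
           else if i - n1 \<in> compl m1' n1' b1' then n2 + s' (i - n1) else 0)))"

definition Jcat :: "(Jobj, Jmor) smcat" where
  "Jcat = \<lparr> Obj = UNIV,
     Hom = Jhom,
     Comp = Jcomp,
     Id = (\<lambda>(n1, n2). ((n1, n2), (n1, n2), inj_id n1, inj_id n2, \<lambda>_. 0)),
     Tens = (\<lambda>(a1, a2) (b1, b2). (a1 + b1, a2 + b2)),
     TensM = Jtensm,
     Unit = (0, 0),
     Deg = fst,
     BlockPerm = (\<lambda>(k1, k2) n \<sigma>. ((n * k1, n * k2), (n * k1, n * k2),
                    block_perm k1 n \<sigma>, block_perm k2 n \<sigma>, \<lambda>_. 0)) \<rparr>"

section \<open>Subcategories of automorphisms\<close>

text \<open>A subcategory of automorphisms is given by its object set AO and its automorphism groups AM k.\<close>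
definition subcat_aut :: "('o,'m) smcat \<Rightarrow> 'o set \<Rightarrow> ('o \<Rightarrow> 'm set) \<Rightarrow> bool" where
  "subcat_aut K AO AM \<longleftrightarrow> AO \<subseteq> Obj K \<and> (\<forall>k. k \<notin> AO \<longrightarrow> AM k = {}) \<and>
     (\<forall>k\<in>AO. Id K k \<in> AM k \<and> (\<forall>g\<in>AM k. is_iso K k k g) \<and>
        (\<forall>g\<in>AM k. \<forall>h\<in>AM k. Comp K g h \<in> AM k))"

definition normal_sub :: "('o,'m) smcat \<Rightarrow> 'o set \<Rightarrow> ('o \<Rightarrow> 'm set) \<Rightarrow> bool" where
  "normal_sub K AO AM \<longleftrightarrow> (\<forall>k\<in>Obj K. \<forall>l\<in>Obj K. \<forall>\<alpha>. is_iso K k l \<alpha> \<longrightarrow>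
      (k \<in> AO \<longleftrightarrow> l \<in> AO) \<and>
      (k \<in> AO \<longrightarrow> bij_betw (\<lambda>\<gamma>. Comp K (Comp K \<alpha> \<gamma>) (iso_inv K k l \<alpha>)) (AM k) (AM l)))"

definition multiplicative :: "('o,'m) smcat \<Rightarrow> 'o set \<Rightarrow> ('o \<Rightarrow> 'm set) \<Rightarrow> bool" where
  "multiplicative K AO AM \<longleftrightarrow> (\<forall>k\<in>AO. \<forall>l\<in>AO. Tens K k l \<in> AO \<and>
      (\<forall>f\<in>AM k. \<forall>g\<in>AM l. TensM K f g \<in> AM (Tens K k l)))"

text \<open>The comma category (c | K_A), K_A the full subcategory on the objects of A.\<close>
definition under_full :: "('o,'m) smcat \<Rightarrow> 'o set \<Rightarrow> 'o \<Rightarrow> ('o \<times> 'm, 'm) cat" where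
  "under_full K AO c = \<lparr> cObj = {(b, f). b \<in> AO \<and> f \<in> Hom K c b},
     cHom = (\<lambda>(b, f) (b', f'). {g \<in> Hom K b b'. Comp K g f = f'}),
     cComp = Comp K,
     cId = (\<lambda>(b, f). Id K b) \<rparr>"

definition hocofinal :: "('o,'m) smcat \<Rightarrow> 'o set \<Rightarrow> bool" where
  "hocofinal K AO \<longleftrightarrow> (\<forall>c\<in>Obj K. contractible_cat (under_full K AO c))"

section \<open>The comma categories (k \<sqcup> - | l)\<close>

definition tobj :: "('o,'m) smcat \<Rightarrow> 'o \<Rightarrow> 'o \<Rightarrow> ('o \<times> 'm) set" where
  "tobj K k l = {(n, \<alpha>). n \<in> Obj K \<and> \<alpha> \<in> Hom K (Tens K k n) l}"

definition tmor :: "('o,'m) smcat \<Rightarrow> 'o \<Rightarrow> ('o \<times> 'm) \<Rightarrow> ('o \<times> 'm) \<Rightarrow> 'm \<Rightarrow> bool" where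
  "tmor K k x y g \<longleftrightarrow> (case x of (n, \<alpha>) \<Rightarrow> case y of (n', \<alpha>') \<Rightarrow>
      g \<in> Hom K n n' \<and> Comp K \<alpha>' (TensM K (Id K k) g) = \<alpha>)"

definition tconn :: "('o,'m) smcat \<Rightarrow> 'o \<Rightarrow> 'o \<Rightarrow> ('o \<times> 'm) \<Rightarrow> ('o \<times> 'm) \<Rightarrow> bool" where
  "tconn K k l = equivclp (\<lambda>x y. x \<in> tobj K k l \<and> y \<in> tobj K k l \<and> (\<exists>g. tmor K k x y g))"

definition tact :: "('o,'m) smcat \<Rightarrow> 'm \<Rightarrow> ('o \<times> 'm) \<Rightarrow> ('o \<times> 'm)" where
  "tact K \<gamma> x = (case x of (n, \<alpha>) \<Rightarrow> (n, Comp K \<alpha> (TensM K \<gamma> (Id K n))))"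

definition components_terminal :: "('o,'m) smcat \<Rightarrow> 'o \<Rightarrow> 'o \<Rightarrow> bool" where
  "components_terminal K k l \<longleftrightarrow> (\<forall>x\<in>tobj K k l. \<exists>t\<in>tobj K k l. tconn K k l x t \<and>
      (\<forall>y\<in>tobj K k l. tconn K k l x y \<longrightarrow> (\<exists>!g. tmor K k y t g)))"

definition free_on_components :: "('o,'m) smcat \<Rightarrow> 'o set \<Rightarrow> ('o \<Rightarrow> 'm set) \<Rightarrow> 'o \<Rightarrow> 'o \<Rightarrow> bool" where
  "free_on_components K AO AM k l \<longleftrightarrow> (\<forall>x\<in>tobj K k l. \<forall>\<gamma>\<in>AM k.
      tconn K k l x (tact K \<gamma> x) \<longrightarrow> \<gamma> = Id K k)"

section \<open>(Very) well-structured relative index categories\<close>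

definition well_structured :: "('o,'m) smcat \<Rightarrow> 'o set \<Rightarrow> ('o \<Rightarrow> 'm set) \<Rightarrow> bool" where
  "well_structured K AO AM \<longleftrightarrow>
     \<comment> \<open>lambda is a strong symmetric monoidal functor to N_0\<close>
     (\<forall>k\<in>Obj K. \<forall>l\<in>Obj K. Hom K k l \<noteq> {} \<longrightarrow> Deg K k \<le> Deg K l) \<and>
     (\<forall>k\<in>Obj K. \<forall>l\<in>Obj K. Deg K (Tens K k l) = Deg K k + Deg K l) \<and> Deg K (Unit K) = 0 \<and>
     \<comment> \<open>A is a normal multiplicative subcategory of automorphisms\<close>
     subcat_aut K AO AM \<and> normal_sub K AO AM \<and> multiplicative K AO AM \<and>
     \<comment> \<open>(i)\<close>
     (\<forall>k\<in>Obj K. \<forall>l\<in>Obj K. \<forall>f\<in>Hom K k l. is_iso K k l f \<longleftrightarrow> Deg K k = Deg K l) \<and>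
     \<comment> \<open>(ii)\<close>
     (\<forall>k\<in>AO. \<forall>l\<in>Obj K. components_terminal K k l) \<and>
     \<comment> \<open>(iii)\<close>
     (\<forall>k\<in>AO. \<forall>l\<in>Obj K. free_on_components K AO AM k l) \<and>
     \<comment> \<open>(iv)\<close>
     hocofinal K AO"

text \<open>Action of (sigma; f_1..f_n) in Sigma_n \<ltimes> A(k)^n via sigma_* o (f_1 \<sqcup> ... \<sqcup> f_n).\<close>
definition very_well_structured :: "('o,'m) smcat \<Rightarrow> 'o set \<Rightarrow> ('o \<Rightarrow> 'm set) \<Rightarrow> bool" where
  "very_well_structured K AO AM \<longleftrightarrow> well_structured K AO AM \<and>
     (\<forall>k\<in>AO. \<forall>l\<in>Obj K. \<forall>n\<ge>1. \<forall>\<sigma> fs. \<sigma> permutes {..<n} \<and> (\<forall>i<n. fs i \<in> AM k) \<longrightarrow>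
        (\<forall>x\<in>tobj K (tpow K k n) l.
           tconn K (tpow K k n) l x (tact K (Comp K (BlockPerm K k n \<sigma>) (tpowM K fs n)) x) \<longrightarrow>
           \<sigma> = id \<and> (\<forall>i<n. fs i = Id K k)))"

end

theory Submission
  imports Defs
begin

text \<open>Every morphism of \<open>(k \<sqcup> - \<down> l)\<close> preserves the restriction of \<open>\<alpha>\<close> to \<open>k\<close>.
  Extending that restriction to a bijection \<open>\<tau>\<close> of \<open>l\<close> gives an object \<open>(l - k, \<tau>)\<close> through
  which every object with the same restriction factors uniquely; hence it is terminal in its
  component. An automorphism \<open>\<gamma>\<close> of \<open>k\<close> changes the restriction to \<open>\<alpha> \<circ> \<gamma>\<close>, and injectivity
  of \<open>\<alpha>\<close> forces \<open>\<gamma> = id\<close>, so the action on components is free. For \<open>k\<^sup>\<sqcup>\<^sup>n\<close> the same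
  argument makes \<open>\<sigma>\<^sub>* \<circ> (f\<^sub>1 \<sqcup> \<dots> \<sqcup> f\<^sub>n)\<close> the identity of \<open>n \<cdot> k\<close>, which forces
  \<open>\<sigma> = id\<close> and all \<open>f\<^sub>i = id\<close> once \<open>k\<close> is nonempty. In \<open>\<J>\<close> everything works
  componentwise, the bijection between complements in the factorization being obtained by
  conjugating that of the given object.\<close>

lemma tconn_invariant:
  assumes "\<And>x y g. tmor K k x y g \<Longrightarrow> r x = r y" and "tconn K k l x y"
  shows "r x = r y"
  using assms(2) unfolding tconn_def
  by (induction rule: equivclp_induct) (auto dest: assms(1))

lemma components_terminalI:
  assumes inv: "\<And>x y. tconn K k l x y \<Longrightarrow> r x = r y"
    and terminal: "\<And>x. x \<in> tobj K k l \<Longrightarrow>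
      \<exists>t\<in>tobj K k l. \<forall>y\<in>tobj K k l. r y = r x \<longrightarrow> (\<exists>!g. tmor K k y t g)"
  shows "components_terminal K k l"
  unfolding components_terminal_def
proof
  fix x assume x: "x \<in> tobj K k l"
  then obtain t where t: "t \<in> tobj K k l"
    and univ: "\<forall>y\<in>tobj K k l. r y = r x \<longrightarrow> (\<exists>!g. tmor K k y t g)"
    using terminal by blast
  obtain g where "tmor K k x t g" using univ x by blast
  then have "tconn K k l x t"
    unfolding tconn_def using x t by (intro r_into_equivclp) blast
  moreover have "\<exists>!g. tmor K k y t g" if "y \<in> tobj K k l" "tconn K k l x y" for y
    using univ inv[OF that(2)] that(1) by simp
  ultimately show "\<exists>t\<in>tobj K k l. tconn K k l x t \<and>
      (\<forall>y\<in>tobj K k l. tconn K k l x y \<longrightarrow> (\<exists>!g. tmor K k y t g))"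
    using t by blast
qed

lemma subcat_aut_Hom: "subcat_aut K AO AM \<Longrightarrow> g \<in> AM k \<Longrightarrow> g \<in> Hom K k k"
  unfolding subcat_aut_def is_iso_def by (cases "k \<in> AO") auto

lemma free_on_componentsI:
  assumes "subcat_aut K AO AM"
    and "\<And>x \<gamma>. x \<in> tobj K k l \<Longrightarrow> \<gamma> \<in> Hom K k k \<Longrightarrow> tconn K k l x (tact K \<gamma> x) \<Longrightarrow> \<gamma> = Id K k"
  shows "free_on_components K AO AM k l"
  unfolding free_on_components_def
proof (intro ballI impI)
  fix x \<gamma> assume "x \<in> tobj K k l" "\<gamma> \<in> AM k" "tconn K k l x (tact K \<gamma> x)"
  then show "\<gamma> = Id K k" using assms(2) subcat_aut_Hom[OF assms(1)] by presburger
qed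

lemma inj_maps_lt: "f \<in> inj_maps m n \<Longrightarrow> i < m \<Longrightarrow> f i < n"
  unfolding inj_maps_def by blast

lemma inj_maps_le: "f \<in> inj_maps m n \<Longrightarrow> m \<le> n"
  unfolding inj_maps_def using card_inj_on_le[of f "{..<m}" "{..<n}"] by auto

lemma inj_maps_restrict:
  assumes "f \<in> inj_maps (k + n) l"
  shows "inj_on f {..<k}" "f ` {..<k} \<subseteq> {..<l}"
  using assms inj_maps_lt[OF assms] by (auto simp: inj_maps_def inj_on_def)

lemma inj_maps_bij: "f \<in> inj_maps n n \<Longrightarrow> bij_betw f {..<n} {..<n}"
  unfolding inj_maps_def bij_betw_def using endo_inj_surj[of "{..<n}" f] by auto

lemma bij_inj_maps: "bij_betw \<tau> {..<l} {..<l} \<Longrightarrow> \<forall>i\<ge>l. \<tau> i = 0 \<Longrightarrow> \<tau> \<in> inj_maps l l"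
  by (auto simp: inj_maps_def bij_betw_def)

lemma bij_compl_empty: "bij_betw \<tau> {..<l} {..<l} \<Longrightarrow> compl l l \<tau> = {}"
  by (auto simp: compl_def bij_betw_def)

lemma inj_maps_compl_empty: "f \<in> inj_maps n n \<Longrightarrow> compl n n f = {}"
  using bij_compl_empty[OF inj_maps_bij] .

lemma inj_maps_compl_empty_imp_eq:
  assumes "b \<in> inj_maps m n" "compl m n b = {}"
  shows "m = n"
proof -
  have "b ` {..<m} = {..<n}" using assms by (auto simp: inj_maps_def compl_def)
  moreover have "card (b ` {..<m}) = m" using assms(1) by (simp add: inj_maps_def card_image)
  ultimately show ?thesis by simp
qed

lemma inj_maps_eq_inj_id: "c \<in> inj_maps k k \<Longrightarrow> \<forall>i<k. c i = i \<Longrightarrow> c = inj_id k"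
  by (auto simp: inj_maps_def inj_id_def)

lemma inj_on_fixpoints:
  assumes "inj_on b A" "c ` A \<subseteq> A" "\<forall>i\<in>A. b (c i) = b i"
  shows "\<forall>i\<in>A. c i = i"
  using assms unfolding inj_on_def by blast

lemma bij_lessThan_the_inv_into:
  assumes "bij_betw \<tau> {..<l} {..<l}"
  shows "\<And>y. y < l \<Longrightarrow> \<tau> (the_inv_into {..<l} \<tau> y) = y"
    "\<And>y. y < l \<Longrightarrow> the_inv_into {..<l} \<tau> y < l"
    "\<And>x. x < l \<Longrightarrow> the_inv_into {..<l} \<tau> (\<tau> x) = x"
  using assms the_inv_into_into[of \<tau> "{..<l}"]
  by (auto simp: bij_betw_def f_the_inv_into_f the_inv_into_f_f)

lemma inj_maps_inverse:
  assumes "f \<in> inj_maps n n"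
  defines "g \<equiv> \<lambda>i. if i < n then the_inv_into {..<n} f i else 0"
  shows "g \<in> inj_maps n n" "inj_comp n g f = inj_id n" "inj_comp n f g = inj_id n"
proof -
  have b: "bij_betw f {..<n} {..<n}" using inj_maps_bij[OF assms(1)] .
  note T = bij_lessThan_the_inv_into[OF b]
  have "bij_betw g {..<n} {..<n}"
    using bij_betw_the_inv_into[OF b] by (rule bij_betw_cong[THEN iffD1, rotated]) (auto simp: g_def)
  then show "g \<in> inj_maps n n" by (rule bij_inj_maps) (auto simp: g_def)
  have "f i < n" if "i < n" for i using assms(1) that by (rule inj_maps_lt)
  then show "inj_comp n g f = inj_id n" "inj_comp n f g = inj_id n"
    using T by (auto simp: inj_comp_def inj_id_def g_def)
qed

lemma inj_extend_to_bij:
  fixes f :: "nat \<Rightarrow> nat"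
  assumes inj: "inj_on f {..<k}" and im: "f ` {..<k} \<subseteq> {..<l}" and kl: "k \<le> l"
  obtains \<tau> where "bij_betw \<tau> {..<l} {..<l}" "\<forall>i<k. \<tau> i = f i" "\<forall>i\<ge>l. \<tau> i = 0"
proof -
  have "card ({..<l} - f ` {..<k}) = card {k..<l}"
    using inj im kl by (simp add: card_Diff_subset card_image)
  then obtain h where h: "bij_betw h {k..<l} ({..<l} - f ` {..<k})"
    using finite_same_card_bij[of "{k..<l}" "{..<l} - f ` {..<k}"] by auto
  define \<tau> where "\<tau> i = (if i < k then f i else if i < l then h i else 0)" for i
  have b1: "bij_betw \<tau> {..<k} (f ` {..<k})"
    using inj unfolding bij_betw_def \<tau>_def by (auto simp: inj_on_def)
  have b2: "bij_betw \<tau> {k..<l} ({..<l} - f ` {..<k})"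
    using h by (rule bij_betw_cong[THEN iffD1, rotated]) (auto simp: \<tau>_def)
  have "bij_betw \<tau> ({..<k} \<union> {k..<l}) (f ` {..<k} \<union> ({..<l} - f ` {..<k}))"
    by (rule bij_betw_combine[OF b1 b2]) auto
  moreover have "{..<k} \<union> {k..<l} = {..<l}" "f ` {..<k} \<union> ({..<l} - f ` {..<k}) = {..<l}"
    using kl im by auto
  ultimately show ?thesis using that[of \<tau>] kl by (auto simp: \<tau>_def)
qed

lemma inj_factor_through_bij_unique:
  assumes "bij_betw \<tau> {..<l} {..<l}" "k \<le> l"
    and "h \<in> inj_maps n (l - k)" "h' \<in> inj_maps n (l - k)"
    and "inj_comp (k + n) \<tau> (inj_tens k n k (inj_id k) h) =
         inj_comp (k + n) \<tau> (inj_tens k n k (inj_id k) h')"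
  shows "h = h'"
proof
  fix j show "h j = h' j"
  proof (cases "j < n")
    case True
    have "\<tau> (k + h j) = \<tau> (k + h' j)"
      using fun_cong[OF assms(5), of "k + j"] True by (simp add: inj_comp_def inj_tens_def)
    moreover have "k + h j < l" "k + h' j < l"
      using inj_maps_lt[OF assms(3) True] inj_maps_lt[OF assms(4) True] assms(2) by auto
    ultimately have "k + h j = k + h' j" using assms(1) unfolding bij_betw_def inj_on_def by blast
    then show ?thesis by simp
  next
    case False then show ?thesis using assms(3,4) by (simp add: inj_maps_def)
  qed
qed

lemma inj_factor_through_bij_exists:
  assumes bij: "bij_betw \<tau> {..<l} {..<l}"
    and \<beta>: "\<beta> \<in> inj_maps (k + n) l" and agree: "\<forall>i<k. \<beta> i = \<tau> i"
  shows "\<exists>h\<in>inj_maps n (l - k). inj_comp (k + n) \<tau> (inj_tens k n k (inj_id k) h) = \<beta>"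
proof -
  define ti where "ti = the_inv_into {..<l} \<tau>"
  note T = bij_lessThan_the_inv_into[OF bij, folded ti_def]
  have \<beta>inj: "inj_on \<beta> {..<k + n}" and \<beta>0: "\<And>i. k + n \<le> i \<Longrightarrow> \<beta> i = 0"
    using \<beta> by (auto simp: inj_maps_def)
  note \<beta>lt = inj_maps_lt[OF \<beta>]
  have ge: "k \<le> ti (\<beta> i)" if "k \<le> i" "i < k + n" for i
  proof (rule ccontr)
    assume lt: "\<not> k \<le> ti (\<beta> i)"
    then have "\<beta> (ti (\<beta> i)) = \<tau> (ti (\<beta> i))" using agree by auto
    also have "\<dots> = \<beta> i" using T(1) \<beta>lt that by auto
    finally have "ti (\<beta> i) = i" using \<beta>inj that lt unfolding inj_on_def by auto
    then show False using that lt by auto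
  qed
  define h where "h j = (if j < n then ti (\<beta> (k + j)) - k else 0)" for j
  have shift: "k + h j = ti (\<beta> (k + j))" if "j < n" for j
    using ge[of "k + j"] that by (simp add: h_def)
  have "inj_on h {..<n}"
  proof (rule inj_onI)
    fix x y assume xy: "x \<in> {..<n}" "y \<in> {..<n}" "h x = h y"
    then have "ti (\<beta> (k + x)) = ti (\<beta> (k + y))" using shift[of x] shift[of y] by simp
    then have "\<tau> (ti (\<beta> (k + x))) = \<tau> (ti (\<beta> (k + y)))" by simp
    then have "\<beta> (k + x) = \<beta> (k + y)" using T(1) \<beta>lt xy by simp
    then show "x = y" using inj_onD[OF \<beta>inj, of "k + x" "k + y"] xy by simp
  qed
  moreover have "h j < l - k" if "j < n" for j
    using shift[OF that] T(2)[OF \<beta>lt, of "k + j"] that by simp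
  ultimately have "h \<in> inj_maps n (l - k)" by (auto simp: inj_maps_def h_def)
  moreover have "inj_comp (k + n) \<tau> (inj_tens k n k (inj_id k) h) i = \<beta> i" for i
  proof -
    consider "i < k" | "k \<le> i" "i < k + n" | "k + n \<le> i" by linarith
    then show ?thesis
    proof cases
      case 1 then show ?thesis using agree by (simp add: inj_comp_def inj_tens_def inj_id_def)
    next
      case 2
      then have "\<tau> (k + h (i - k)) = \<beta> i" using shift[of "i - k"] T(1) \<beta>lt by simp
      then show ?thesis using 2 by (simp add: inj_comp_def inj_tens_def)
    next
      case 3 then show ?thesis using \<beta>0 by (simp add: inj_comp_def inj_tens_def)
    qed
  qed
  ultimately show ?thesis by blast
qed

lemma inj_tens_id_image:
  "inj_tens k n k (inj_id k) h ` {..<k + n} = {..<k} \<union> (\<lambda>j. k + h j) ` {..<n}"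
proof -
  have "{..<k + n} = {..<k} \<union> (\<lambda>j. k + j) ` {..<n}"
  proof (intro equalityI subsetI)
    fix x assume "x \<in> {..<k + n}"
    then have "x < k \<or> (x = k + (x - k) \<and> x - k < n)" by auto
    then show "x \<in> {..<k} \<union> (\<lambda>j. k + j) ` {..<n}" by blast
  qed auto
  moreover have "inj_tens k n k (inj_id k) h ` {..<k} = (\<lambda>i. i) ` {..<k}"
    by (rule image_cong) (auto simp: inj_tens_def inj_id_def)
  moreover have "(\<lambda>j. inj_tens k n k (inj_id k) h (k + j)) ` {..<n} = (\<lambda>j. k + h j) ` {..<n}"
    by (rule image_cong) (auto simp: inj_tens_def)
  ultimately show ?thesis by (simp add: image_Un image_image)
qed

lemma compl_inj_tens_id:
  assumes "h \<in> inj_maps n m"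
  shows "compl (k + n) (k + m) (inj_tens k n k (inj_id k) h) = (\<lambda>j. k + j) ` compl n m h"
proof
  show "compl (k + n) (k + m) (inj_tens k n k (inj_id k) h) \<subseteq> (\<lambda>j. k + j) ` compl n m h"
  proof
    fix x assume "x \<in> compl (k + n) (k + m) (inj_tens k n k (inj_id k) h)"
    then have "x < k + m" "x \<notin> {..<k}" "x \<notin> (\<lambda>j. k + h j) ` {..<n}"
      unfolding compl_def inj_tens_id_image by auto
    then have "x - k \<in> compl n m h" "x = k + (x - k)" unfolding compl_def by force+
    then show "x \<in> (\<lambda>j. k + j) ` compl n m h" by blast
  qed
  show "(\<lambda>j. k + j) ` compl n m h \<subseteq> compl (k + n) (k + m) (inj_tens k n k (inj_id k) h)"
    unfolding compl_def inj_tens_id_image by auto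
qed

lemma compl_inj_comp_bij:
  assumes "bij_betw \<tau> {..<l} {..<l}" "A ` {..<p} \<subseteq> {..<l}"
  shows "compl p l (inj_comp p \<tau> A) = \<tau> ` compl p l A"
proof -
  have "inj_comp p \<tau> A ` {..<p} = \<tau> ` (A ` {..<p})" by (auto simp: inj_comp_def image_image)
  moreover have "\<tau> ` {..<l} = {..<l}" "inj_on \<tau> {..<l}" using assms(1) by (auto simp: bij_betw_def)
  ultimately show ?thesis
    unfolding compl_def using inj_on_image_set_diff[of \<tau> "{..<l}" "{..<l}" "A ` {..<p}"] assms(2)
    by auto
qed

lemma compl_factor_through_bij:
  assumes \<tau>: "bij_betw \<tau> {..<l} {..<l}" and kl: "k \<le> l" and g: "g \<in> inj_maps n (l - k)"
    and \<beta>: "inj_comp (k + n) \<tau> (inj_tens k n k (inj_id k) g) = \<beta>"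
  shows "compl (k + n) l (inj_tens k n k (inj_id k) g) = (\<lambda>j. k + j) ` compl n (l - k) g"
    "bij_betw (\<lambda>j. \<tau> (k + j)) (compl n (l - k) g) (compl (k + n) l \<beta>)"
proof -
  have kk: "k + (l - k) = l" using kl by simp
  show C: "compl (k + n) l (inj_tens k n k (inj_id k) g) = (\<lambda>j. k + j) ` compl n (l - k) g"
    using compl_inj_tens_id[OF g, of k] kk by simp
  have "k + g j < l" if "j < n" for j using inj_maps_lt[OF g that] kl by linarith
  then have "inj_tens k n k (inj_id k) g ` {..<k + n} \<subseteq> {..<l}"
    using kl unfolding inj_tens_id_image by auto
  from compl_inj_comp_bij[OF \<tau> this]
  have image: "compl (k + n) l \<beta> = (\<lambda>j. \<tau> (k + j)) ` compl n (l - k) g"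
    using \<beta> C by (simp add: image_image)
  have "inj_on (\<lambda>j. \<tau> (k + j)) (compl n (l - k) g)"
  proof (rule inj_onI)
    fix x y assume "x \<in> compl n (l - k) g" "y \<in> compl n (l - k) g" "\<tau> (k + x) = \<tau> (k + y)"
    moreover from this have "k + x < l" "k + y < l" by (auto simp: compl_def)
    ultimately have "k + x = k + y" using \<tau> unfolding bij_betw_def inj_on_def by blast
    then show "x = y" by simp
  qed
  then show "bij_betw (\<lambda>j. \<tau> (k + j)) (compl n (l - k) g) (compl (k + n) l \<beta>)"
    using image by (simp add: bij_betw_def)
qed

lemma bij_betw_conjugate_unique:
  fixes \<phi>2 :: "'c::zero \<Rightarrow> 'd"
  assumes \<phi>1: "bij_betw \<phi>1 C1 D1" and \<phi>2: "bij_betw \<phi>2 C2 D2" and \<sigma>: "bij_betw \<sigma> D1 D2"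
  shows "\<exists>!\<rho>. bij_betw \<rho> C1 C2 \<and> (\<forall>j. j \<notin> C1 \<longrightarrow> \<rho> j = 0) \<and> (\<forall>j\<in>C1. \<phi>2 (\<rho> j) = \<sigma> (\<phi>1 j))"
proof (rule ex1I)
  define \<rho> where "\<rho> j = (if j \<in> C1 then the_inv_into C2 \<phi>2 (\<sigma> (\<phi>1 j)) else 0)" for j
  have "bij_betw (the_inv_into C2 \<phi>2 \<circ> \<sigma> \<circ> \<phi>1) C1 C2"
    by (intro bij_betw_trans[OF \<phi>1] bij_betw_trans[OF \<sigma>] bij_betw_the_inv_into[OF \<phi>2])
  then have "bij_betw \<rho> C1 C2"
    by (rule bij_betw_cong[THEN iffD1, rotated]) (auto simp: \<rho>_def)
  moreover have "\<phi>2 (\<rho> j) = \<sigma> (\<phi>1 j)" if "j \<in> C1" for j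
  proof -
    have "\<sigma> (\<phi>1 j) \<in> \<phi>2 ` C2" using that \<phi>1 \<phi>2 \<sigma> by (auto simp: bij_betw_def)
    then show ?thesis using that \<phi>2 by (simp add: \<rho>_def bij_betw_def f_the_inv_into_f)
  qed
  ultimately show "bij_betw \<rho> C1 C2 \<and> (\<forall>j. j \<notin> C1 \<longrightarrow> \<rho> j = 0) \<and> (\<forall>j\<in>C1. \<phi>2 (\<rho> j) = \<sigma> (\<phi>1 j))"
    by (simp add: \<rho>_def)
  fix \<rho>' assume \<rho>': "bij_betw \<rho>' C1 C2 \<and> (\<forall>j. j \<notin> C1 \<longrightarrow> \<rho>' j = 0) \<and> (\<forall>j\<in>C1. \<phi>2 (\<rho>' j) = \<sigma> (\<phi>1 j))"
  show "\<rho>' = \<rho>"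
  proof
    fix j show "\<rho>' j = \<rho> j"
    proof (cases "j \<in> C1")
      case True
      then have "\<rho>' j \<in> C2" using \<rho>' by (auto simp: bij_betw_def)
      then show ?thesis
        using True \<rho>' \<phi>2 the_inv_into_f_f[of \<phi>2 C2 "\<rho>' j"] by (simp add: \<rho>_def bij_betw_def)
    next
      case False then show ?thesis using \<rho>' by (simp add: \<rho>_def)
    qed
  qed
qed

lemma divmod_block_eq:
  fixes a b c d k :: nat
  assumes "a * k + b = c * k + d" "b < k" "d < k"
  shows "a = c" "b = d"
proof -
  have "a = (a * k + b) div k" using assms(2) by simp
  also have "\<dots> = c" using assms(1,3) by simp
  finally show "a = c" .
  have "b = (a * k + b) mod k" using assms(2) by simp
  also have "\<dots> = d" using assms(1,3) by simp
  finally show "b = d" .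
qed

lemma block_index_lt:
  fixes q r k n :: nat
  assumes "q < n" "r < k"
  shows "q * k + r < n * k"
proof -
  have "Suc q * k \<le> n * k" using assms(1) by (intro mult_le_mono1) simp
  then show ?thesis using assms(2) by simp
qed

text \<open>\<open>inj_blocks k c n\<close> is the injection underlying \<open>c 0 \<sqcup> \<dots> \<sqcup> c (n - 1)\<close>, the block \<open>q\<close>
  occupying the positions \<open>q * k + r\<close>, \<open>r < k\<close>.\<close>

definition inj_blocks :: "nat \<Rightarrow> (nat \<Rightarrow> nat \<Rightarrow> nat) \<Rightarrow> nat \<Rightarrow> nat \<Rightarrow> nat" where
  "inj_blocks k c n i = (if i < n * k then c (i div k) (i mod k) + (i div k) * k else 0)"

lemma inj_tens_inj_blocks:
  "inj_tens (n * k) k (n * k) (inj_blocks k c n) (c n) = inj_blocks k c (Suc n)"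
proof
  fix i
  consider "i < n * k" | "n * k \<le> i" "i < n * k + k" | "n * k + k \<le> i" by linarith
  then show "inj_tens (n * k) k (n * k) (inj_blocks k c n) (c n) i = inj_blocks k c (Suc n) i"
  proof cases
    case 1 then show ?thesis by (simp add: inj_tens_def inj_blocks_def)
  next
    case 2
    then obtain r where "i = n * k + r" "r < k" by (metis add_less_cancel_left le_add_diff_inverse)
    then show ?thesis by (simp add: inj_tens_def inj_blocks_def add.commute)
  next
    case 3 then show ?thesis by (simp add: inj_tens_def inj_blocks_def)
  qed
qed

lemma block_action_apply:
  assumes "q < n" "r < k" "c q r < k"
  shows "inj_comp (n * k) (block_perm k n \<sigma>) (inj_blocks k c n) (q * k + r) = \<sigma> q * k + c q r"
proof -
  have "inj_blocks k c n (q * k + r) = q * k + c q r"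
    using block_index_lt[OF assms(1,2)] assms(2) by (simp add: inj_blocks_def)
  moreover have "q * k + c q r < n * k" using block_index_lt[OF assms(1,3)] .
  ultimately show ?thesis
    using block_index_lt[OF assms(1,2)] assms(3) by (simp add: inj_comp_def block_perm_def)
qed

lemma block_action_lt:
  assumes \<sigma>: "\<sigma> permutes {..<n}" and c: "\<forall>q<n. \<forall>r<k. c q r < k" and i: "i < n * k"
  shows "inj_comp (n * k) (block_perm k n \<sigma>) (inj_blocks k c n) i < n * k"
proof -
  have "0 < k" using i by (cases k) auto
  then have qr: "i = (i div k) * k + i mod k" "i mod k < k" by simp_all
  have q: "i div k < n" using i by (simp add: less_mult_imp_div_less)
  have "\<sigma> (i div k) < n" using permutes_in_image[OF \<sigma>] q by simp
  then show ?thesis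
    using block_action_apply[OF q qr(2)] block_index_lt c q qr by metis
qed

lemma block_action_fixed:
  assumes c: "\<forall>q<n. \<forall>r<k. c q r < k"
    and fixed: "\<forall>i<n * k. inj_comp (n * k) (block_perm k n \<sigma>) (inj_blocks k c n) i = i"
    and qr: "q < n" "r < k"
  shows "\<sigma> q = q \<and> c q r = r"
proof -
  have "\<sigma> q * k + c q r = q * k + r"
    using block_action_apply[OF qr] c qr fixed block_index_lt[OF qr] by metis
  then show ?thesis using divmod_block_eq[of "\<sigma> q" k "c q r" q r] c qr by simp
qed

lemma permutes_lessThan_eq_id: "\<sigma> permutes {..<n} \<Longrightarrow> \<forall>q<n. \<sigma> q = q \<Longrightarrow> \<sigma> = id"
  by (metis eq_id_iff lessThan_iff permutes_not_in)

section \<open>The category \<open>\<I>\<close>\<close>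

lemma Icat_simps [simp]:
  "Obj Icat = UNIV" "Hom Icat m n = {(m, n, f) | f. f \<in> inj_maps m n}"
  "Comp Icat (b, c, g) (a, b', f) = (a, c, inj_comp a g f)" "Id Icat n = (n, n, inj_id n)"
  "Tens Icat = (+)" "TensM Icat (a, b, f) (c, d, g') = (a + c, b + d, inj_tens a c b f g')"
  "Unit Icat = 0" "Deg Icat = (\<lambda>n. n)" "BlockPerm Icat k n \<sigma> = (n * k, n * k, block_perm k n \<sigma>)"
  by (simp_all add: Icat_def)

lemma tobj_Icat_iff:
  "x \<in> tobj Icat k l \<longleftrightarrow> (\<exists>n f. x = (n, (k + n, l, f)) \<and> f \<in> inj_maps (k + n) l)"
  by (cases x) (auto simp: tobj_def)

lemma tmor_Icat_iff:
  "tmor Icat k (n, (k + n, l, \<beta>)) (m, (k + m, l, \<tau>)) g \<longleftrightarrow>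
   (\<exists>h. g = (n, m, h) \<and> h \<in> inj_maps n m \<and> inj_comp (k + n) \<tau> (inj_tens k n k (inj_id k) h) = \<beta>)"
  by (cases g) (auto simp: tmor_def)

definition tobjI_head :: "nat \<Rightarrow> nat \<times> Imor \<Rightarrow> nat \<Rightarrow> nat" where
  "tobjI_head k x i = (if i < k then snd (snd (snd x)) i else 0)"

lemma tobjI_head_simp [simp]: "tobjI_head k (n, (a, b, f)) i = (if i < k then f i else 0)"
  by (simp add: tobjI_head_def)

lemma tmor_Icat_head:
  assumes "tmor Icat k (n, (a, b, \<beta>)) (n', (a', b', \<beta>')) g"
  shows "tobjI_head k (n, (a, b, \<beta>)) = tobjI_head k (n', (a', b', \<beta>'))"
proof
  fix i
  obtain h where "inj_comp (k + n) \<beta>' (inj_tens k n k (inj_id k) h) = \<beta>"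
    using assms by (cases g) (auto simp: tmor_def)
  from fun_cong[OF this, of i] show "tobjI_head k (n, (a, b, \<beta>)) i = tobjI_head k (n', (a', b', \<beta>')) i"
    by (auto simp: inj_comp_def inj_tens_def inj_id_def)
qed

lemma tconn_Icat_head: "tconn Icat k l x y \<Longrightarrow> tobjI_head k x = tobjI_head k y"
  by (erule tconn_invariant[rotated]) (metis prod_cases4 tmor_Icat_head)

lemma tobjI_head_tact:
  "tobjI_head k (tact Icat (k, k, c) (n, (a, b, f))) i = (if i < k then f (c i) else 0)"
  by (simp add: tact_def inj_comp_def inj_tens_def)

lemma tconn_tact_Icat_fixes:
  assumes x: "x \<in> tobj Icat k l" and c: "\<forall>i<k. c i < k"
    and conn: "tconn Icat k l x (tact Icat (k, k, c) x)"
  shows "\<forall>i<k. c i = i"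
proof -
  obtain n f where xf: "x = (n, (k + n, l, f))" "f \<in> inj_maps (k + n) l"
    using x by (auto simp: tobj_Icat_iff)
  have "f (c i) = f i" if "i < k" for i
    using fun_cong[OF tconn_Icat_head[OF conn], of i] that by (simp add: xf(1) tobjI_head_tact)
  then show ?thesis
    using inj_on_fixpoints[of f "{..<k}" c] inj_maps_restrict(1)[OF xf(2)] c by auto
qed

lemma components_terminal_Icat: "components_terminal Icat k l"
proof (rule components_terminalI[of Icat k l "tobjI_head k"])
  show "tobjI_head k x = tobjI_head k y" if "tconn Icat k l x y" for x y
    using that by (rule tconn_Icat_head)
next
  fix x assume "x \<in> tobj Icat k l"
  then obtain n f where x: "x = (n, (k + n, l, f))" "f \<in> inj_maps (k + n) l"
    by (auto simp: tobj_Icat_iff)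
  have kl: "k \<le> l" using inj_maps_le[OF x(2)] by simp
  obtain \<tau> where \<tau>: "bij_betw \<tau> {..<l} {..<l}" "\<forall>i<k. \<tau> i = f i" "\<forall>i\<ge>l. \<tau> i = 0"
    using inj_extend_to_bij[OF inj_maps_restrict[OF x(2)] kl] by blast
  define t where "t = (l - k, (k + (l - k), l, \<tau>))"
  have "t \<in> tobj Icat k l" using bij_inj_maps[OF \<tau>(1,3)] kl by (simp add: t_def tobj_Icat_iff)
  moreover have "\<exists>!g. tmor Icat k y t g"
    if y: "y \<in> tobj Icat k l" and head: "tobjI_head k y = tobjI_head k x" for y
  proof -
    obtain n' \<beta> where y: "y = (n', (k + n', l, \<beta>))" "\<beta> \<in> inj_maps (k + n') l"
      using y by (auto simp: tobj_Icat_iff)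
    have "\<beta> i = \<tau> i" if "i < k" for i
      using fun_cong[OF head, of i] \<tau>(2) that by (simp add: x(1) y(1))
    then obtain h where "h \<in> inj_maps n' (l - k)"
      "inj_comp (k + n') \<tau> (inj_tens k n' k (inj_id k) h) = \<beta>"
      using inj_factor_through_bij_exists[OF \<tau>(1) y(2)] by blast
    then show ?thesis
      unfolding t_def y(1) tmor_Icat_iff using inj_factor_through_bij_unique[OF \<tau>(1) kl] by blast
  qed
  ultimately show "\<exists>t\<in>tobj Icat k l. \<forall>y\<in>tobj Icat k l.
      tobjI_head k y = tobjI_head k x \<longrightarrow> (\<exists>!g. tmor Icat k y t g)" by blast
qed

lemma Hom_Icat_imp_le: "Hom Icat m n \<noteq> {} \<Longrightarrow> m \<le> n"
  by (auto dest!: inj_maps_le)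

lemma is_iso_Icat_iff: "f \<in> Hom Icat m n \<Longrightarrow> is_iso Icat m n f \<longleftrightarrow> m = n"
proof
  assume "f \<in> Hom Icat m n" "is_iso Icat m n f"
  then show "m = n" unfolding is_iso_def by (auto dest!: inj_maps_le)
next
  assume "f \<in> Hom Icat m n" "m = n"
  then obtain f' where f: "f = (n, n, f')" "f' \<in> inj_maps n n" by auto
  define g where "g \<equiv> \<lambda>i. if i < n then the_inv_into {..<n} f' i else 0"
  note G = inj_maps_inverse[OF f(2), folded g_def]
  show "is_iso Icat m n f" unfolding is_iso_def
    using G f \<open>m = n\<close> by (intro conjI bexI[where x = "(n, n, g)"]) auto
qed

lemma free_on_components_Icat:
  assumes "subcat_aut Icat AO AM"
  shows "free_on_components Icat AO AM k l"
proof (rule free_on_componentsI[OF assms])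
  fix x \<gamma> assume x: "x \<in> tobj Icat k l" and "\<gamma> \<in> Hom Icat k k"
    and conn: "tconn Icat k l x (tact Icat \<gamma> x)"
  then obtain c where \<gamma>: "\<gamma> = (k, k, c)" "c \<in> inj_maps k k" by auto
  have "\<forall>i<k. c i = i"
    using tconn_tact_Icat_fixes[OF x _ conn[unfolded \<gamma>(1)]] inj_maps_lt[OF \<gamma>(2)] by blast
  then show "\<gamma> = Id Icat k" using inj_maps_eq_inj_id[OF \<gamma>(2)] \<gamma>(1) by simp
qed

lemma well_structured_Icat:
  assumes "subcat_aut Icat AO AM" "normal_sub Icat AO AM" "multiplicative Icat AO AM" "hocofinal Icat AO"
  shows "well_structured Icat AO AM"
  unfolding well_structured_def
  using assms Hom_Icat_imp_le is_iso_Icat_iff components_terminal_Icat free_on_components_Icat[OF assms(1)]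
  by auto

lemma tpow_Icat: "tpow Icat k n = n * k"
  by (induction n) auto

lemma tpowM_Icat: "\<forall>i<n. fs i = (k, k, c i) \<Longrightarrow> tpowM Icat fs n = (n * k, n * k, inj_blocks k c n)"
proof (induction n)
  case 0 then show ?case by (auto simp: inj_blocks_def inj_id_def)
next
  case (Suc n) then show ?case using inj_tens_inj_blocks[of n k c] by simp
qed

lemma block_action_free_Icat:
  assumes k: "0 < k" and \<sigma>: "\<sigma> permutes {..<n}" and fs: "\<forall>i<n. fs i \<in> Hom Icat k k"
    and x: "x \<in> tobj Icat (tpow Icat k n) l"
    and conn: "tconn Icat (tpow Icat k n) l x
      (tact Icat (Comp Icat (BlockPerm Icat k n \<sigma>) (tpowM Icat fs n)) x)"
  shows "\<sigma> = id \<and> (\<forall>i<n. fs i = Id Icat k)"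
proof -
  define c where "c i = snd (snd (fs i))" for i
  have fs_eq: "fs i = (k, k, c i)" and c_inj: "c i \<in> inj_maps k k" if "i < n" for i
    using fs that by (auto simp: c_def)
  have c_lt: "\<forall>q<n. \<forall>r<k. c q r < k" using c_inj inj_maps_lt by blast
  define G where "G = inj_comp (n * k) (block_perm k n \<sigma>) (inj_blocks k c n)"
  have "Comp Icat (BlockPerm Icat k n \<sigma>) (tpowM Icat fs n) = (n * k, n * k, G)"
    using tpowM_Icat[of n fs k c] fs_eq by (simp add: G_def)
  then have conn': "tconn Icat (n * k) l x (tact Icat (n * k, n * k, G) x)"
    using conn by (simp only: tpow_Icat)
  have "\<forall>i<n * k. G i < n * k" using block_action_lt[OF \<sigma> c_lt] by (simp add: G_def)
  then have "\<forall>i<n * k. G i = i"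
    using tconn_tact_Icat_fixes[OF x[unfolded tpow_Icat] _ conn'] by blast
  then have fixed: "\<sigma> q = q \<and> c q r = r" if "q < n" "r < k" for q r
    using block_action_fixed[OF c_lt _ that] by (simp add: G_def)
  have "\<sigma> = id" using permutes_lessThan_eq_id[OF \<sigma>] fixed k by blast
  moreover have "fs q = Id Icat k" if "q < n" for q
    using inj_maps_eq_inj_id[OF c_inj[OF that]] fixed[OF that] fs_eq[OF that] by simp
  ultimately show ?thesis by blast
qed

lemma very_well_structured_Icat:
  assumes ws: "well_structured Icat AO AM" and pos: "\<forall>k\<in>AO. 0 < k"
  shows "very_well_structured Icat AO AM"
  unfolding very_well_structured_def
proof (rule conjI[OF ws], intro ballI allI impI)
  have sub: "subcat_aut Icat AO AM" using ws by (simp add: well_structured_def)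
  fix k l n \<sigma> fs x
  assume k: "k \<in> AO" and \<sigma>fs: "\<sigma> permutes {..<n} \<and> (\<forall>i<n. fs i \<in> AM k)"
    and x: "x \<in> tobj Icat (tpow Icat k n) l"
    and conn: "tconn Icat (tpow Icat k n) l x
      (tact Icat (Comp Icat (BlockPerm Icat k n \<sigma>) (tpowM Icat fs n)) x)"
  from \<sigma>fs have \<sigma>: "\<sigma> permutes {..<n}" and fs: "\<forall>i<n. fs i \<in> Hom Icat k k"
    using subcat_aut_Hom[OF sub] by blast+
  show "\<sigma> = id \<and> (\<forall>i<n. fs i = Id Icat k)"
    using pos k by (intro block_action_free_Icat[OF _ \<sigma> fs x conn]) blast
qed

section \<open>The category \<open>\<J>\<close>\<close>

lemma Jhom_iff:
  "x \<in> Jhom (m1, m2) (n1, n2) \<longleftrightarrow> (\<exists>b1 b2 s. x = ((m1, m2), (n1, n2), b1, b2, s) \<and>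
      b1 \<in> inj_maps m1 n1 \<and> b2 \<in> inj_maps m2 n2 \<and>
      bij_betw s (compl m1 n1 b1) (compl m2 n2 b2) \<and> (\<forall>i. i \<notin> compl m1 n1 b1 \<longrightarrow> s i = 0))"
  by (auto simp: Jhom_def)

lemma Jcat_simps [simp]:
  "Obj Jcat = UNIV" "Hom Jcat = Jhom" "Comp Jcat = Jcomp"
  "Id Jcat (n1, n2) = ((n1, n2), (n1, n2), inj_id n1, inj_id n2, \<lambda>_. 0)"
  "Tens Jcat (a1, a2) (b1, b2) = (a1 + b1, a2 + b2)" "TensM Jcat = Jtensm" "Unit Jcat = (0, 0)"
  "Deg Jcat = fst"
  "BlockPerm Jcat (k1, k2) n \<sigma> = ((n * k1, n * k2), (n * k1, n * k2),
     block_perm k1 n \<sigma>, block_perm k2 n \<sigma>, \<lambda>_. 0)"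
  by (simp_all add: Jcat_def)

lemma Jcomp_eq:
  "Jcomp ((m1, m2), (n1, n2), b1, b2, s) ((l1, l2), y, a1, a2, r) =
     ((l1, l2), (n1, n2), inj_comp l1 b1 a1, inj_comp l2 b2 a2,
      (\<lambda>i. if i \<in> compl m1 n1 b1 then s i
           else if (\<exists>x. x \<in> compl l1 m1 a1 \<and> b1 x = i)
             then b2 (r (THE x. x < m1 \<and> b1 x = i)) else 0))"
  by (simp add: Jcomp_def)

lemma Jtensm_eq:
  "Jtensm ((m1, m2), (n1, n2), b1, b2, s) ((m1', m2'), (n1', n2'), b1', b2', s') =
     ((m1 + m1', m2 + m2'), (n1 + n1', n2 + n2'),
      inj_tens m1 m1' n1 b1 b1', inj_tens m2 m2' n2 b2 b2',
      (\<lambda>i. if i < n1 then s i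
           else if i - n1 \<in> compl m1' n1' b1' then n2 + s' (i - n1) else 0))"
  by (simp add: Jtensm_def)

lemma tobj_Jcat_iff:
  "x \<in> tobj Jcat (k1, k2) (l1, l2) \<longleftrightarrow>
    (\<exists>n1 n2 b1 b2 s. x = ((n1, n2), ((k1 + n1, k2 + n2), (l1, l2), b1, b2, s)) \<and>
      b1 \<in> inj_maps (k1 + n1) l1 \<and> b2 \<in> inj_maps (k2 + n2) l2 \<and>
      bij_betw s (compl (k1 + n1) l1 b1) (compl (k2 + n2) l2 b2) \<and>
      (\<forall>i. i \<notin> compl (k1 + n1) l1 b1 \<longrightarrow> s i = 0))"
  by (cases x) (auto simp: tobj_def Jhom_iff)

definition tobjJ_head :: "Jobj \<Rightarrow> Jobj \<times> Jmor \<Rightarrow> (nat \<Rightarrow> nat) \<times> (nat \<Rightarrow> nat)" where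
  "tobjJ_head k x = (case x of (n, (a, b, b1, b2, s)) \<Rightarrow>
     (\<lambda>i. if i < fst k then b1 i else 0, \<lambda>i. if i < snd k then b2 i else 0))"

lemma tconn_Jcat_head: "tconn Jcat k l x y \<Longrightarrow> tobjJ_head k x = tobjJ_head k y"
proof (erule tconn_invariant[rotated])
  show "tobjJ_head k x = tobjJ_head k y" if "tmor Jcat k x y g" for x y g
    using that by (cases k; cases x; cases y)
      (auto simp: tmor_def tobjJ_head_def Jhom_def Jcomp_eq Jtensm_eq inj_comp_def inj_tens_def inj_id_def
        split: prod.splits)
qed

lemma tobjJ_head_tact:
  "tobjJ_head (k1, k2) (tact Jcat ((k1, k2), (k1, k2), c1, c2, z) ((n1, n2), ((a1, a2), L, b1, b2, s))) =
   (\<lambda>i. if i < k1 then b1 (c1 i) else 0, \<lambda>i. if i < k2 then b2 (c2 i) else 0)"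
  by (cases L) (auto simp: tact_def tobjJ_head_def Jcomp_eq Jtensm_eq inj_comp_def inj_tens_def)

lemma tconn_tact_Jcat_fixes:
  assumes x: "x \<in> tobj Jcat (k1, k2) (l1, l2)" and c: "\<forall>i<k1. c1 i < k1" "\<forall>i<k2. c2 i < k2"
    and conn: "tconn Jcat (k1, k2) (l1, l2) x (tact Jcat ((k1, k2), (k1, k2), c1, c2, z) x)"
  shows "(\<forall>i<k1. c1 i = i) \<and> (\<forall>i<k2. c2 i = i)"
proof -
  obtain n1 n2 b1 b2 s where xb: "x = ((n1, n2), ((k1 + n1, k2 + n2), (l1, l2), b1, b2, s))"
      "b1 \<in> inj_maps (k1 + n1) l1" "b2 \<in> inj_maps (k2 + n2) l2"
    using x unfolding tobj_Jcat_iff by blast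
  have "(\<lambda>i. if i < k1 then b1 i else 0, \<lambda>i. if i < k2 then b2 i else 0) =
        (\<lambda>i. if i < k1 then b1 (c1 i) else 0, \<lambda>i. if i < k2 then b2 (c2 i) else 0)"
    using tconn_Jcat_head[OF conn] by (simp add: xb(1) tobjJ_head_tact) (simp add: tobjJ_head_def)
  then have "\<forall>i<k1. b1 (c1 i) = b1 i" "\<forall>i<k2. b2 (c2 i) = b2 i"
    by (metis (mono_tags, lifting) prod.inject)+
  moreover have "c1 ` {..<k1} \<subseteq> {..<k1}" "c2 ` {..<k2} \<subseteq> {..<k2}" using c by auto
  ultimately show ?thesis
    using inj_on_fixpoints[OF inj_maps_restrict(1)[OF xb(2)]]
      inj_on_fixpoints[OF inj_maps_restrict(1)[OF xb(3)]] by simp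
qed

lemma free_on_components_Jcat:
  assumes "subcat_aut Jcat AO AM"
  shows "free_on_components Jcat AO AM k l"
proof (rule free_on_componentsI[OF assms])
  obtain k1 k2 l1 l2 where kl: "k = (k1, k2)" "l = (l1, l2)" by (cases k; cases l)
  fix x \<gamma> assume x: "x \<in> tobj Jcat k l" and "\<gamma> \<in> Hom Jcat k k"
    and conn: "tconn Jcat k l x (tact Jcat \<gamma> x)"
  then obtain c1 c2 z where \<gamma>: "\<gamma> = ((k1, k2), (k1, k2), c1, c2, z)"
      "c1 \<in> inj_maps k1 k1" "c2 \<in> inj_maps k2 k2" "\<forall>i. i \<notin> compl k1 k1 c1 \<longrightarrow> z i = 0"
    unfolding kl by (auto simp: Jhom_iff)
  have "(\<forall>i<k1. c1 i = i) \<and> (\<forall>i<k2. c2 i = i)"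
    using tconn_tact_Jcat_fixes[OF x[unfolded kl] _ _ conn[unfolded kl \<gamma>(1)]]
      inj_maps_lt[OF \<gamma>(2)] inj_maps_lt[OF \<gamma>(3)] by blast
  moreover have "z = (\<lambda>_. 0)" using \<gamma>(4) inj_maps_compl_empty[OF \<gamma>(2)] by auto
  ultimately show "\<gamma> = Id Jcat k"
    using inj_maps_eq_inj_id[OF \<gamma>(2)] inj_maps_eq_inj_id[OF \<gamma>(3)] \<gamma>(1) kl by simp
qed

lemma Jhom_imp_le: "Jhom k l \<noteq> {} \<Longrightarrow> fst k \<le> fst l"
  by (cases k; cases l) (auto simp: Jhom_iff dest!: inj_maps_le)

lemma is_iso_Jcat_iff:
  assumes "f \<in> Jhom k l"
  shows "is_iso Jcat k l f \<longleftrightarrow> fst k = fst l"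
proof
  assume "is_iso Jcat k l f"
  then obtain g where "g \<in> Jhom l k" unfolding is_iso_def by auto
  then show "fst k = fst l" using Jhom_imp_le[of k l] Jhom_imp_le[of l k] assms by fastforce
next
  assume eq: "fst k = fst l"
  obtain m1 m2 n1 n2 where kl: "k = (m1, m2)" "l = (n1, n2)" by (cases k; cases l)
  obtain b1 b2 s where f: "f = ((m1, m2), (n1, n2), b1, b2, s)" "b1 \<in> inj_maps m1 n1"
      "b2 \<in> inj_maps m2 n2" "bij_betw s (compl m1 n1 b1) (compl m2 n2 b2)"
      "\<forall>i. i \<notin> compl m1 n1 b1 \<longrightarrow> s i = 0"
    using assms unfolding kl Jhom_iff by blast
  have mn1: "m1 = n1" using eq kl by simp
  have c1: "compl m1 n1 b1 = {}" using inj_maps_compl_empty f(2) mn1 by simp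
  then have "compl m2 n2 b2 = {}" using f(4) by (simp add: bij_betw_def)
  then have mn2: "m2 = n2" using inj_maps_compl_empty_imp_eq f(3) by blast
  have s0: "s = (\<lambda>_. 0)" using f(5) c1 by auto
  define g1 where "g1 \<equiv> \<lambda>i. if i < m1 then the_inv_into {..<m1} b1 i else 0"
  define g2 where "g2 \<equiv> \<lambda>i. if i < m2 then the_inv_into {..<m2} b2 i else 0"
  note G1 = inj_maps_inverse[OF f(2)[folded mn1], folded g1_def]
  note G2 = inj_maps_inverse[OF f(3)[folded mn2], folded g2_def]
  define g where "g = ((m1, m2), (m1, m2), g1, g2, (\<lambda>_::nat. 0::nat))"
  have C: "compl m1 m1 g1 = {}" "compl m2 m2 g2 = {}" "compl m1 m1 b1 = {}" "compl m2 m2 b2 = {}"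
    using inj_maps_compl_empty G1(1) G2(1) f(2,3) mn1 mn2 by auto
  have "g \<in> Jhom l k"
    unfolding g_def kl mn1[symmetric] mn2[symmetric] Jhom_iff using G1(1) G2(1) C
    by (auto simp: bij_betw_def)
  moreover have "Jcomp g f = Id Jcat k" "Jcomp f g = Id Jcat l"
    unfolding g_def f(1) kl mn1[symmetric] mn2[symmetric] s0
    using G1(2,3) G2(2,3) C by (simp_all add: Jcomp_eq)
  ultimately show "is_iso Jcat k l f" unfolding is_iso_def using assms by auto
qed

text \<open>The bijection component of \<open>t \<circ> (id\<^sub>k \<sqcup> (g\<^sub>1, g\<^sub>2, \<rho>))\<close> for \<open>t = (\<tau>\<^sub>1, \<tau>\<^sub>2, 0)\<close>, as computed by
  \<open>Jcomp\<close> and \<open>Jtensm\<close>.\<close>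

definition Jterminal_comp_bij ::
    "nat \<Rightarrow> nat \<Rightarrow> nat \<Rightarrow> nat \<Rightarrow> nat \<Rightarrow> nat \<Rightarrow> (nat \<Rightarrow> nat) \<Rightarrow> (nat \<Rightarrow> nat) \<Rightarrow> (nat \<Rightarrow> nat) \<Rightarrow>
      (nat \<Rightarrow> nat) \<Rightarrow> nat \<Rightarrow> nat" where
  "Jterminal_comp_bij k1 k2 n1 l1 m1 m2 \<tau>1 \<tau>2 g1 \<rho> = (\<lambda>i. if i \<in> compl l1 l1 \<tau>1 then 0
      else if (\<exists>x. x \<in> compl (k1 + n1) l1 (inj_tens k1 n1 k1 (inj_id k1) g1) \<and> \<tau>1 x = i)
      then \<tau>2 ((\<lambda>i. if i < k1 then 0 else if i - k1 \<in> compl n1 m1 g1 then k2 + \<rho> (i - k1) else 0)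
                (THE x. x < l1 \<and> \<tau>1 x = i)) else 0)"

lemma tmor_Jcat_terminal_iff:
  "tmor Jcat (k1, k2) ((n1, n2), ((k1 + n1, k2 + n2), (l1, l2), \<beta>1, \<beta>2, \<sigma>))
      ((m1, m2), ((l1, l2), (l1, l2), \<tau>1, \<tau>2, \<lambda>_. 0)) g \<longleftrightarrow>
   (\<exists>g1 g2 \<rho>. g = ((n1, n2), (m1, m2), g1, g2, \<rho>) \<and> g1 \<in> inj_maps n1 m1 \<and> g2 \<in> inj_maps n2 m2 \<and>
      bij_betw \<rho> (compl n1 m1 g1) (compl n2 m2 g2) \<and> (\<forall>i. i \<notin> compl n1 m1 g1 \<longrightarrow> \<rho> i = 0) \<and>
      inj_comp (k1 + n1) \<tau>1 (inj_tens k1 n1 k1 (inj_id k1) g1) = \<beta>1 \<and>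
      inj_comp (k2 + n2) \<tau>2 (inj_tens k2 n2 k2 (inj_id k2) g2) = \<beta>2 \<and>
      Jterminal_comp_bij k1 k2 n1 l1 m1 m2 \<tau>1 \<tau>2 g1 \<rho> = \<sigma>)"
  unfolding tmor_def Jcat_simps
  by (auto simp: Jcomp_eq Jtensm_eq Jterminal_comp_bij_def Jhom_iff)

lemma Jterminal_comp_bij_apply:
  assumes \<tau>1: "bij_betw \<tau>1 {..<l1} {..<l1}" and kl1: "k1 \<le> l1"
    and g1: "g1 \<in> inj_maps n1 (l1 - k1)"
    and \<beta>1: "inj_comp (k1 + n1) \<tau>1 (inj_tens k1 n1 k1 (inj_id k1) g1) = \<beta>1"
  shows "\<And>j. j \<in> compl n1 (l1 - k1) g1 \<Longrightarrow>
      Jterminal_comp_bij k1 k2 n1 l1 (l1 - k1) m2 \<tau>1 \<tau>2 g1 \<rho> (\<tau>1 (k1 + j)) = \<tau>2 (k2 + \<rho> j)"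
    "\<And>i. i \<notin> compl (k1 + n1) l1 \<beta>1 \<Longrightarrow> Jterminal_comp_bij k1 k2 n1 l1 (l1 - k1) m2 \<tau>1 \<tau>2 g1 \<rho> i = 0"
proof -
  note P = compl_factor_through_bij[OF \<tau>1 kl1 g1 \<beta>1]
  fix j assume j: "j \<in> compl n1 (l1 - k1) g1"
  have jl: "k1 + j < l1" using j kl1 by (auto simp: compl_def)
  have "\<exists>x. x \<in> compl (k1 + n1) l1 (inj_tens k1 n1 k1 (inj_id k1) g1) \<and> \<tau>1 x = \<tau>1 (k1 + j)"
    using P(1) j by blast
  moreover have "(THE x. x < l1 \<and> \<tau>1 x = \<tau>1 (k1 + j)) = k1 + j"
    using \<tau>1 jl unfolding bij_betw_def inj_on_def by (intro the_equality) auto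
  ultimately show "Jterminal_comp_bij k1 k2 n1 l1 (l1 - k1) m2 \<tau>1 \<tau>2 g1 \<rho> (\<tau>1 (k1 + j)) = \<tau>2 (k2 + \<rho> j)"
    unfolding Jterminal_comp_bij_def using bij_compl_empty[OF \<tau>1] j by simp
next
  note P = compl_factor_through_bij[OF \<tau>1 kl1 g1 \<beta>1]
  fix i assume i: "i \<notin> compl (k1 + n1) l1 \<beta>1"
  have none: "\<not> (\<exists>x. x \<in> compl (k1 + n1) l1 (inj_tens k1 n1 k1 (inj_id k1) g1) \<and> \<tau>1 x = i)"
    using i P unfolding bij_betw_def by auto
  show "Jterminal_comp_bij k1 k2 n1 l1 (l1 - k1) m2 \<tau>1 \<tau>2 g1 \<rho> i = 0"
    unfolding Jterminal_comp_bij_def by (simp only: if_not_P[OF none] if_cancel)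
qed

lemma Jterminal_comp_bij_eq_iff:
  assumes \<tau>1: "bij_betw \<tau>1 {..<l1} {..<l1}" and kl1: "k1 \<le> l1"
    and g1: "g1 \<in> inj_maps n1 (l1 - k1)"
    and \<beta>1: "inj_comp (k1 + n1) \<tau>1 (inj_tens k1 n1 k1 (inj_id k1) g1) = \<beta>1"
    and \<sigma>0: "\<forall>i. i \<notin> compl (k1 + n1) l1 \<beta>1 \<longrightarrow> \<sigma> i = 0"
  shows "Jterminal_comp_bij k1 k2 n1 l1 (l1 - k1) m2 \<tau>1 \<tau>2 g1 \<rho> = \<sigma> \<longleftrightarrow>
    (\<forall>j\<in>compl n1 (l1 - k1) g1. \<tau>2 (k2 + \<rho> j) = \<sigma> (\<tau>1 (k1 + j)))"
    (is "?T = \<sigma> \<longleftrightarrow> _")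
proof
  note A = Jterminal_comp_bij_apply[OF \<tau>1 kl1 g1 \<beta>1, of _ k2 m2 \<tau>2 \<rho>]
  note image = compl_factor_through_bij(2)[OF \<tau>1 kl1 g1 \<beta>1, unfolded bij_betw_def]
  show "?T = \<sigma> \<Longrightarrow> \<forall>j\<in>compl n1 (l1 - k1) g1. \<tau>2 (k2 + \<rho> j) = \<sigma> (\<tau>1 (k1 + j))"
    using A(1) by metis
  assume conj: "\<forall>j\<in>compl n1 (l1 - k1) g1. \<tau>2 (k2 + \<rho> j) = \<sigma> (\<tau>1 (k1 + j))"
  show "?T = \<sigma>"
  proof
    fix i show "?T i = \<sigma> i"
    proof (cases "i \<in> compl (k1 + n1) l1 \<beta>1")
      case True
      then obtain j where "j \<in> compl n1 (l1 - k1) g1" "i = \<tau>1 (k1 + j)" using image by auto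
      then show ?thesis using A(1) conj by simp
    next
      case False then show ?thesis using A(2) \<sigma>0 by simp
    qed
  qed
qed

lemma tmor_Jcat_terminal_unique:
  assumes \<tau>1: "bij_betw \<tau>1 {..<l1} {..<l1}" and kl1: "k1 \<le> l1"
    and \<tau>2: "bij_betw \<tau>2 {..<l2} {..<l2}" and kl2: "k2 \<le> l2"
    and \<beta>1: "\<beta>1 \<in> inj_maps (k1 + n1) l1" and \<beta>2: "\<beta>2 \<in> inj_maps (k2 + n2) l2"
    and \<sigma>: "bij_betw \<sigma> (compl (k1 + n1) l1 \<beta>1) (compl (k2 + n2) l2 \<beta>2)"
    and \<sigma>0: "\<forall>i. i \<notin> compl (k1 + n1) l1 \<beta>1 \<longrightarrow> \<sigma> i = 0"
    and e1: "\<forall>i<k1. \<beta>1 i = \<tau>1 i" and e2: "\<forall>i<k2. \<beta>2 i = \<tau>2 i"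
  shows "\<exists>!g. tmor Jcat (k1, k2) ((n1, n2), ((k1 + n1, k2 + n2), (l1, l2), \<beta>1, \<beta>2, \<sigma>))
    ((l1 - k1, l2 - k2), ((l1, l2), (l1, l2), \<tau>1, \<tau>2, \<lambda>_. 0)) g"
proof -
  obtain g1 where G1: "g1 \<in> inj_maps n1 (l1 - k1)"
      "inj_comp (k1 + n1) \<tau>1 (inj_tens k1 n1 k1 (inj_id k1) g1) = \<beta>1"
    using inj_factor_through_bij_exists[OF \<tau>1 \<beta>1 e1] by blast
  obtain g2 where G2: "g2 \<in> inj_maps n2 (l2 - k2)"
      "inj_comp (k2 + n2) \<tau>2 (inj_tens k2 n2 k2 (inj_id k2) g2) = \<beta>2"
    using inj_factor_through_bij_exists[OF \<tau>2 \<beta>2 e2] by blast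
  note T = Jterminal_comp_bij_eq_iff[OF \<tau>1 kl1 G1 \<sigma>0]
  obtain \<rho> where \<rho>: "bij_betw \<rho> (compl n1 (l1 - k1) g1) (compl n2 (l2 - k2) g2)"
      "\<forall>j. j \<notin> compl n1 (l1 - k1) g1 \<longrightarrow> \<rho> j = 0"
      "\<forall>j\<in>compl n1 (l1 - k1) g1. \<tau>2 (k2 + \<rho> j) = \<sigma> (\<tau>1 (k1 + j))"
    and \<rho>_unique: "\<And>\<rho>'. bij_betw \<rho>' (compl n1 (l1 - k1) g1) (compl n2 (l2 - k2) g2) \<and>
      (\<forall>j. j \<notin> compl n1 (l1 - k1) g1 \<longrightarrow> \<rho>' j = 0) \<and>
      (\<forall>j\<in>compl n1 (l1 - k1) g1. \<tau>2 (k2 + \<rho>' j) = \<sigma> (\<tau>1 (k1 + j))) \<Longrightarrow> \<rho>' = \<rho>"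
    using bij_betw_conjugate_unique[OF compl_factor_through_bij(2)[OF \<tau>1 kl1 G1]
        compl_factor_through_bij(2)[OF \<tau>2 kl2 G2] \<sigma>]
    by (elim ex1E) blast
  show ?thesis unfolding tmor_Jcat_terminal_iff
  proof (rule ex1I[of _ "((n1, n2), (l1 - k1, l2 - k2), g1, g2, \<rho>)"], goal_cases)
    case 1 show ?case using G1 G2 \<rho> T by blast
  next
    case (2 g)
    then obtain g1' g2' \<rho>' where g: "g = ((n1, n2), (l1 - k1, l2 - k2), g1', g2', \<rho>')"
      and g1': "g1' \<in> inj_maps n1 (l1 - k1)" "inj_comp (k1 + n1) \<tau>1 (inj_tens k1 n1 k1 (inj_id k1) g1') = \<beta>1"
      and g2': "g2' \<in> inj_maps n2 (l2 - k2)" "inj_comp (k2 + n2) \<tau>2 (inj_tens k2 n2 k2 (inj_id k2) g2') = \<beta>2"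
      and \<rho>': "bij_betw \<rho>' (compl n1 (l1 - k1) g1') (compl n2 (l2 - k2) g2')"
        "\<forall>i. i \<notin> compl n1 (l1 - k1) g1' \<longrightarrow> \<rho>' i = 0"
        "Jterminal_comp_bij k1 k2 n1 l1 (l1 - k1) (l2 - k2) \<tau>1 \<tau>2 g1' \<rho>' = \<sigma>"
      by blast
    have "g1' = g1" using inj_factor_through_bij_unique[OF \<tau>1 kl1 g1'(1) G1(1)] g1'(2) G1(2) by simp
    moreover have "g2' = g2" using inj_factor_through_bij_unique[OF \<tau>2 kl2 g2'(1) G2(1)] g2'(2) G2(2) by simp
    ultimately have "\<rho>' = \<rho>" using \<rho>_unique \<rho>' T by simp
    then show ?case using g \<open>g1' = g1\<close> \<open>g2' = g2\<close> by simp
  qed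
qed

lemma components_terminal_Jcat: "components_terminal Jcat k l"
proof -
  obtain k1 k2 l1 l2 where kl: "k = (k1, k2)" "l = (l1, l2)" by (cases k; cases l)
  show ?thesis unfolding kl
  proof (rule components_terminalI[of Jcat "(k1, k2)" "(l1, l2)" "tobjJ_head (k1, k2)"])
    show "tobjJ_head (k1, k2) x = tobjJ_head (k1, k2) y" if "tconn Jcat (k1, k2) (l1, l2) x y" for x y
      using that by (rule tconn_Jcat_head)
  next
    fix x assume "x \<in> tobj Jcat (k1, k2) (l1, l2)"
    then obtain n1 n2 b1 b2 s where x: "x = ((n1, n2), ((k1 + n1, k2 + n2), (l1, l2), b1, b2, s))"
        "b1 \<in> inj_maps (k1 + n1) l1" "b2 \<in> inj_maps (k2 + n2) l2"
      unfolding tobj_Jcat_iff by blast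
    have kl1: "k1 \<le> l1" and kl2: "k2 \<le> l2" using inj_maps_le[OF x(2)] inj_maps_le[OF x(3)] by simp_all
    obtain \<tau>1 where \<tau>1: "bij_betw \<tau>1 {..<l1} {..<l1}" "\<forall>i<k1. \<tau>1 i = b1 i" "\<forall>i\<ge>l1. \<tau>1 i = 0"
      using inj_extend_to_bij[OF inj_maps_restrict[OF x(2)] kl1] by blast
    obtain \<tau>2 where \<tau>2: "bij_betw \<tau>2 {..<l2} {..<l2}" "\<forall>i<k2. \<tau>2 i = b2 i" "\<forall>i\<ge>l2. \<tau>2 i = 0"
      using inj_extend_to_bij[OF inj_maps_restrict[OF x(3)] kl2] by blast
    define t where "t = ((l1 - k1, l2 - k2), ((l1, l2), (l1, l2), \<tau>1, \<tau>2, \<lambda>_::nat. 0::nat))"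
    have "t \<in> tobj Jcat (k1, k2) (l1, l2)"
      unfolding t_def tobj_Jcat_iff using bij_inj_maps[OF \<tau>1(1,3)] bij_inj_maps[OF \<tau>2(1,3)]
        bij_compl_empty[OF \<tau>1(1)] bij_compl_empty[OF \<tau>2(1)] kl1 kl2 by (auto simp: bij_betw_def)
    moreover have "\<exists>!g. tmor Jcat (k1, k2) y t g"
      if y: "y \<in> tobj Jcat (k1, k2) (l1, l2)" and head: "tobjJ_head (k1, k2) y = tobjJ_head (k1, k2) x" for y
    proof -
      obtain n1' n2' \<beta>1 \<beta>2 \<sigma> where y: "y = ((n1', n2'), ((k1 + n1', k2 + n2'), (l1, l2), \<beta>1, \<beta>2, \<sigma>))"
          "\<beta>1 \<in> inj_maps (k1 + n1') l1" "\<beta>2 \<in> inj_maps (k2 + n2') l2"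
          "bij_betw \<sigma> (compl (k1 + n1') l1 \<beta>1) (compl (k2 + n2') l2 \<beta>2)"
          "\<forall>i. i \<notin> compl (k1 + n1') l1 \<beta>1 \<longrightarrow> \<sigma> i = 0"
        using y unfolding tobj_Jcat_iff by blast
      have heads: "(\<lambda>i. if i < k1 then \<beta>1 i else 0, \<lambda>i. if i < k2 then \<beta>2 i else 0) =
                   (\<lambda>i. if i < k1 then b1 i else 0, \<lambda>i. if i < k2 then b2 i else 0)"
        using head unfolding x(1) y(1) by (simp add: tobjJ_head_def)
      have "\<forall>i<k1. \<beta>1 i = \<tau>1 i" "\<forall>i<k2. \<beta>2 i = \<tau>2 i"
        using \<tau>1(2) \<tau>2(2) heads by (metis (mono_tags, lifting) prod.inject)+
      then show ?thesis unfolding t_def y(1)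
        by (rule tmor_Jcat_terminal_unique[OF \<tau>1(1) kl1 \<tau>2(1) kl2 y(2-5)])
    qed
    ultimately show "\<exists>t\<in>tobj Jcat (k1, k2) (l1, l2). \<forall>y\<in>tobj Jcat (k1, k2) (l1, l2).
        tobjJ_head (k1, k2) y = tobjJ_head (k1, k2) x \<longrightarrow> (\<exists>!g. tmor Jcat (k1, k2) y t g)" by blast
  qed
qed

lemma well_structured_Jcat:
  assumes "subcat_aut Jcat AO AM" "normal_sub Jcat AO AM" "multiplicative Jcat AO AM" "hocofinal Jcat AO"
  shows "well_structured Jcat AO AM"
proof -
  have "\<forall>k\<in>Obj Jcat. \<forall>l\<in>Obj Jcat. Deg Jcat (Tens Jcat k l) = Deg Jcat k + Deg Jcat l"
    by (auto split: prod.splits)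
  then show ?thesis
    unfolding well_structured_def
    using assms Jhom_imp_le is_iso_Jcat_iff components_terminal_Jcat free_on_components_Jcat[OF assms(1)]
    by auto
qed

lemma tpow_Jcat: "tpow Jcat (k1, k2) n = (n * k1, n * k2)"
  by (induction n) auto

lemma tpowM_Jcat:
  "\<forall>i<n. fs i = ((k1, k2), (k1, k2), c i, d i, z i) \<Longrightarrow>
   \<exists>S. tpowM Jcat fs n = ((n * k1, n * k2), (n * k1, n * k2), inj_blocks k1 c n, inj_blocks k2 d n, S)"
proof (induction n)
  case 0 then show ?case by (auto simp: inj_blocks_def inj_id_def)
next
  case (Suc n)
  then obtain S where "tpowM Jcat fs n =
      ((n * k1, n * k2), (n * k1, n * k2), inj_blocks k1 c n, inj_blocks k2 d n, S)" by auto
  then show ?case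
    using Suc.prems inj_tens_inj_blocks[of n k1 c] inj_tens_inj_blocks[of n k2 d]
    by (simp add: Jtensm_eq add.commute)
qed

lemma block_action_free_Jcat:
  assumes k1: "0 < k1" and \<sigma>: "\<sigma> permutes {..<n}" and fs: "\<forall>i<n. fs i \<in> Jhom (k1, k2) (k1, k2)"
    and x: "x \<in> tobj Jcat (tpow Jcat (k1, k2) n) (l1, l2)"
    and conn: "tconn Jcat (tpow Jcat (k1, k2) n) (l1, l2) x
      (tact Jcat (Comp Jcat (BlockPerm Jcat (k1, k2) n \<sigma>) (tpowM Jcat fs n)) x)"
  shows "\<sigma> = id \<and> (\<forall>i<n. fs i = Id Jcat (k1, k2))"
proof -
  define c where "c i = fst (snd (snd (fs i)))" for i
  define d where "d i = fst (snd (snd (snd (fs i))))" for i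
  define z where "z i = snd (snd (snd (snd (fs i))))" for i
  have fs_eq: "fs i = ((k1, k2), (k1, k2), c i, d i, z i)" and c_inj: "c i \<in> inj_maps k1 k1"
    and d_inj: "d i \<in> inj_maps k2 k2" and z0: "z i = (\<lambda>_. 0)" if i: "i < n" for i
  proof -
    obtain b1 b2 s where f: "fs i = ((k1, k2), (k1, k2), b1, b2, s)" "b1 \<in> inj_maps k1 k1"
        "b2 \<in> inj_maps k2 k2" "\<forall>j. j \<notin> compl k1 k1 b1 \<longrightarrow> s j = 0"
      using fs[rule_format, OF i] unfolding Jhom_iff by blast
    have "s = (\<lambda>_. 0)" using f(4) inj_maps_compl_empty[OF f(2)] by auto
    then show "fs i = ((k1, k2), (k1, k2), c i, d i, z i)" "c i \<in> inj_maps k1 k1"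
      "d i \<in> inj_maps k2 k2" "z i = (\<lambda>_. 0)" using f by (simp_all add: c_def d_def z_def)
  qed
  have c_lt: "\<forall>q<n. \<forall>r<k1. c q r < k1" using c_inj inj_maps_lt by blast
  have d_lt: "\<forall>q<n. \<forall>r<k2. d q r < k2" using d_inj inj_maps_lt by blast
  define G1 where "G1 = inj_comp (n * k1) (block_perm k1 n \<sigma>) (inj_blocks k1 c n)"
  define G2 where "G2 = inj_comp (n * k2) (block_perm k2 n \<sigma>) (inj_blocks k2 d n)"
  obtain S where "tpowM Jcat fs n =
      ((n * k1, n * k2), (n * k1, n * k2), inj_blocks k1 c n, inj_blocks k2 d n, S)"
    using tpowM_Jcat[of n fs k1 k2 c d z] fs_eq by blast
  then obtain W where
    "Comp Jcat (BlockPerm Jcat (k1, k2) n \<sigma>) (tpowM Jcat fs n) = ((n * k1, n * k2), (n * k1, n * k2), G1, G2, W)"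
    by (simp add: Jcomp_eq G1_def G2_def)
  then have conn': "tconn Jcat (n * k1, n * k2) (l1, l2) x
      (tact Jcat ((n * k1, n * k2), (n * k1, n * k2), G1, G2, W) x)"
    using conn by (simp only: tpow_Jcat)
  have "\<forall>i<n * k1. G1 i < n * k1" "\<forall>i<n * k2. G2 i < n * k2"
    using block_action_lt[OF \<sigma> c_lt] block_action_lt[OF \<sigma> d_lt] by (simp_all add: G1_def G2_def)
  then have G_id: "(\<forall>i<n * k1. G1 i = i) \<and> (\<forall>i<n * k2. G2 i = i)"
    using tconn_tact_Jcat_fixes[OF x[unfolded tpow_Jcat] _ _ conn'] by blast
  have fixed1: "\<sigma> q = q \<and> c q r = r" if "q < n" "r < k1" for q r
    using G_id block_action_fixed[where \<sigma> = \<sigma>, OF c_lt _ that] by (simp add: G1_def)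
  have fixed2: "d q r = r" if "q < n" "r < k2" for q r
    using G_id block_action_fixed[where \<sigma> = \<sigma>, OF d_lt _ that] by (simp add: G2_def)
  have "\<sigma> = id" using permutes_lessThan_eq_id[OF \<sigma>] fixed1 k1 by blast
  moreover have "fs q = Id Jcat (k1, k2)" if "q < n" for q
    using inj_maps_eq_inj_id[OF c_inj[OF that]] inj_maps_eq_inj_id[OF d_inj[OF that]]
      fixed1[OF that] fixed2[OF that] fs_eq[OF that] z0[OF that] by simp
  ultimately show ?thesis by blast
qed

lemma very_well_structured_Jcat:
  assumes ws: "well_structured Jcat AO AM" and pos: "\<forall>k\<in>AO. 0 < fst k"
  shows "very_well_structured Jcat AO AM"
  unfolding very_well_structured_def
proof (rule conjI[OF ws], intro ballI allI impI)
  have sub: "subcat_aut Jcat AO AM" using ws by (simp add: well_structured_def)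
  fix k l n \<sigma> fs x
  assume k: "k \<in> AO" and \<sigma>fs: "\<sigma> permutes {..<n} \<and> (\<forall>i<n. fs i \<in> AM k)"
    and x: "x \<in> tobj Jcat (tpow Jcat k n) l"
    and conn: "tconn Jcat (tpow Jcat k n) l x
      (tact Jcat (Comp Jcat (BlockPerm Jcat k n \<sigma>) (tpowM Jcat fs n)) x)"
  obtain k1 k2 l1 l2 where kl: "k = (k1, k2)" "l = (l1, l2)" by (cases k; cases l)
  from \<sigma>fs have \<sigma>: "\<sigma> permutes {..<n}" and fs: "\<forall>i<n. fs i \<in> Jhom (k1, k2) (k1, k2)"
    using subcat_aut_Hom[OF sub] kl by auto
  show "\<sigma> = id \<and> (\<forall>i<n. fs i = Id Jcat k)"
    using pos k kl block_action_free_Jcat[OF _ \<sigma> fs x[unfolded kl] conn[unfolded kl]] by auto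
qed

theorem proposition5p7:
  fixes AOI :: "nat set" and AMI :: "nat \<Rightarrow> Imor set"
    and AOJ :: "Jobj set" and AMJ :: "Jobj \<Rightarrow> Jmor set"
  shows "(subcat_aut Icat AOI AMI \<and> normal_sub Icat AOI AMI \<and> multiplicative Icat AOI AMI \<and>
            hocofinal Icat AOI \<longrightarrow>
          well_structured Icat AOI AMI \<and>
          ((\<forall>k\<in>AOI. 0 < Deg Icat k) \<longrightarrow> very_well_structured Icat AOI AMI)) \<and>
         (subcat_aut Jcat AOJ AMJ \<and> normal_sub Jcat AOJ AMJ \<and> multiplicative Jcat AOJ AMJ \<and>
            hocofinal Jcat AOJ \<longrightarrow>
          well_structured Jcat AOJ AMJ \<and>
          ((\<forall>k\<in>AOJ. 0 < Deg Jcat k) \<longrightarrow> very_well_structured Jcat AOJ AMJ))"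
  using well_structured_Icat[of AOI AMI] very_well_structured_Icat[of AOI AMI]
    well_structured_Jcat[of AOJ AMJ] very_well_structured_Jcat[of AOJ AMJ]
  by simp

end
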